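(* Let $\alpha\in\{1,\tfrac32,2\}$ and let $\Phi^\ddagger:\mathcal{M}_2\to\mathcal{M}_2$ be a unital $\alpha$-positive linear map. Write the spectrum of $\Phi^\ddagger$, counted with algebraic multiplicity, as $\{1,\lambda_1,\lambda_2,\lambda_3\}$ with $\lambda_k=x_k+iy_k$ ($x_k,y_k\in\mathbb{R}$) ordered so that $x_1\ge x_2\ge x_3$. Then $$(\alpha-1)(1+x_3)\ \ge\ 2(\alpha-2)+x_1+x_2 .$$ In particular, for a unital Schwarz map $1+x_3\ge 2(x_1+x_2-1)$, and for a unital completely positive map $1+x_3\ge x_1+x_2$.
   Context: "$\alpha$-positive" means: positive for $\alpha=1$ (maps positive semidefinite matrices to positive semidefinite matrices), unital Schwarz for $\alpha=3/2$ (i.e. $\Phi(X^\dagger X)\ge\Phi(X)^\dagger\Phi(X)$ for all $X$), and completely positive for $\alpha=2$. Unital means $\Phi^\ddagger(\mathbb{1})=\mathbb{1}$. *)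

theory Defs
  imports "Jordan_Normal_Form.Char_Poly"
begin

definition adj_mat :: "complex mat \<Rightarrow> complex mat" where
  "adj_mat A = mat (dim_col A) (dim_row A) (\<lambda>(i,j). cnj (A $$ (j,i)))"

definition psd :: "nat \<Rightarrow> complex mat \<Rightarrow> bool" where
  "psd n A \<longleftrightarrow> A \<in> carrier_mat n n \<and> adj_mat A = A \<and>
     (\<forall>v :: nat \<Rightarrow> complex.
        Re (\<Sum>i<n. \<Sum>j<n. cnj (v i) * A $$ (i,j) * v j) \<ge> 0)"

definition linear_map_M2 :: "(complex mat \<Rightarrow> complex mat) \<Rightarrow> bool" where
  "linear_map_M2 \<Phi> \<longleftrightarrow>
     (\<forall>X \<in> carrier_mat 2 2. \<Phi> X \<in> carrier_mat 2 2) \<and>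
     (\<forall>X \<in> carrier_mat 2 2. \<forall>Y \<in> carrier_mat 2 2. \<Phi> (X + Y) = \<Phi> X + \<Phi> Y) \<and>
     (\<forall>c. \<forall>X \<in> carrier_mat 2 2. \<Phi> (c \<cdot>\<^sub>m X) = c \<cdot>\<^sub>m \<Phi> X)"

definition unital_M2 :: "(complex mat \<Rightarrow> complex mat) \<Rightarrow> bool" where
  "unital_M2 \<Phi> \<longleftrightarrow> \<Phi> (1\<^sub>m 2) = 1\<^sub>m 2"

definition positive_map :: "(complex mat \<Rightarrow> complex mat) \<Rightarrow> bool" where
  "positive_map \<Phi> \<longleftrightarrow> (\<forall>X. psd 2 X \<longrightarrow> psd 2 (\<Phi> X))"

definition schwarz_map :: "(complex mat \<Rightarrow> complex mat) \<Rightarrow> bool" where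
  "schwarz_map \<Phi> \<longleftrightarrow> (\<forall>X \<in> carrier_mat 2 2.
      psd 2 (\<Phi> (adj_mat X * X) - adj_mat (\<Phi> X) * \<Phi> X))"

text \<open>The (p,q) 2x2 block of a 2n x 2n matrix, and the map id_n tensor Phi applied blockwise.\<close>
definition block2 :: "complex mat \<Rightarrow> nat \<Rightarrow> nat \<Rightarrow> complex mat" where
  "block2 X p q = mat 2 2 (\<lambda>(i,j). X $$ (2*p+i, 2*q+j))"

definition ampliate :: "nat \<Rightarrow> (complex mat \<Rightarrow> complex mat) \<Rightarrow> complex mat \<Rightarrow> complex mat" where
  "ampliate n \<Phi> X = mat (2*n) (2*n)
     (\<lambda>(a,b). \<Phi> (block2 X (a div 2) (b div 2)) $$ (a mod 2, b mod 2))"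

definition completely_positive :: "(complex mat \<Rightarrow> complex mat) \<Rightarrow> bool" where
  "completely_positive \<Phi> \<longleftrightarrow>
     (\<forall>n X. psd (2*n) X \<longrightarrow> psd (2*n) (ampliate n \<Phi> X))"

definition alpha_positive :: "real \<Rightarrow> (complex mat \<Rightarrow> complex mat) \<Rightarrow> bool" where
  "alpha_positive \<alpha> \<Phi> \<longleftrightarrow>
     (\<alpha> = 1 \<and> positive_map \<Phi>) \<or> (\<alpha> = 3/2 \<and> schwarz_map \<Phi>) \<or>
     (\<alpha> = 2 \<and> completely_positive \<Phi>)"

text \<open>Matrix of Phi on the basis E_00,E_01,E_10,E_11 (index 2*i+j).\<close>
definition rep_mat :: "(complex mat \<Rightarrow> complex mat) \<Rightarrow> complex mat" where
  "rep_mat \<Phi> = mat 4 4 (\<lambda>(r,s).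
     \<Phi> (mat 2 2 (\<lambda>(k,l). if (k,l) = (s div 2, s mod 2) then 1 else 0)) $$ (r div 2, r mod 2))"

end

theory Submission
  imports Defs
begin

text \<open>
  Let \<open>\<lambda> \<noteq> 1\<close> be an eigenvalue of \<open>\<Phi>\<close> with eigenvector \<open>V\<close>. Since \<open>\<Phi>\<close> is unital, the traceless
  part \<open>W\<close> of \<open>V\<close> is nonzero and satisfies \<open>\<langle>W, \<Phi> W\<rangle> = \<lambda> \<parallel>W\<parallel>\<^sup>2\<close> (Hilbert--Schmidt inner product).
  Since \<open>\<Phi>\<close> preserves Hermiticity, writing \<open>W = H\<^sub>1 + i H\<^sub>2\<close> with traceless Hermitian \<open>H\<^sub>k\<close> shows
  that \<open>Re \<lambda>\<close> is a weighted average of the quotients \<open>\<langle>H, \<Phi> H\<rangle> / \<parallel>H\<parallel>\<^sup>2\<close>. Every traceless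
  Hermitian \<open>2 \<times> 2\<close> matrix is \<open>H = \<psi>\<psi>\<^sup>* - \<chi>\<chi>\<^sup>*\<close> for an orthogonal pair \<open>\<psi>, \<chi>\<close> of equal norm,
  and in this basis the quotient is an expression in the four numbers \<open>\<langle>u, \<Phi>(x y\<^sup>*) w\<rangle>\<close>
  with \<open>u, w, x, y \<in> {\<psi>, \<chi>}\<close>. Positivity bounds the quotient above by \<open>1\<close>; for completely
  positive maps the Choi matrix evaluated at \<open>\<psi> \<otimes> \<psi> - \<chi> \<otimes> \<chi>\<close>, and for Schwarz maps the Schwarz
  inequality for \<open>X = \<chi> \<psi>\<^sup>*\<close> combined with Cauchy--Schwarz, bound it below in terms of
  \<open>tr \<Phi> = 1 + \<lambda>\<^sub>1 + \<lambda>\<^sub>2 + \<lambda>\<^sub>3\<close>. The lower bound is applied to \<open>\<lambda>\<^sub>3\<close>, the upper bound to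
  \<open>\<lambda>\<^sub>1, \<lambda>\<^sub>2\<close>.
\<close>

section \<open>Linear maps on 2 x 2 matrices in coordinates\<close>

text \<open>A linear map is encoded by the tensor \<open>f i j k l = \<Phi>(E\<^sub>k\<^sub>l)\<^sub>i\<^sub>j\<close>; \<open>2 \<times> 2\<close> matrices and
  vectors are functions on indices below 2.\<close>

type_synonym tensor = "nat \<Rightarrow> nat \<Rightarrow> nat \<Rightarrow> nat \<Rightarrow> complex"

lemma sum_lessThan_2: "(\<Sum>i<2. g i) = g 0 + g (1::nat)"
  by (simp add: numeral_2_eq_2)

lemma less_2_cases: "i < (2::nat) \<Longrightarrow> i = 0 \<or> i = 1"
  by auto

definition tensor_apply :: "tensor \<Rightarrow> (nat \<Rightarrow> nat \<Rightarrow> complex) \<Rightarrow> nat \<Rightarrow> nat \<Rightarrow> complex" where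
  "tensor_apply f W i j = (\<Sum>k<2. \<Sum>l<2. f i j k l * W k l)"

definition hs_inner :: "(nat \<Rightarrow> nat \<Rightarrow> complex) \<Rightarrow> (nat \<Rightarrow> nat \<Rightarrow> complex) \<Rightarrow> complex" where
  "hs_inner A B = (\<Sum>i<2. \<Sum>j<2. cnj (A i j) * B i j)"

definition hs_form :: "tensor \<Rightarrow> (nat \<Rightarrow> nat \<Rightarrow> complex) \<Rightarrow> complex" where
  "hs_form f A = hs_inner A (tensor_apply f A)"

definition hs_norm2 :: "(nat \<Rightarrow> nat \<Rightarrow> complex) \<Rightarrow> real" where
  "hs_norm2 A = (\<Sum>i<2. \<Sum>j<2. (cmod (A i j))\<^sup>2)"

definition vnorm2 :: "(nat \<Rightarrow> complex) \<Rightarrow> real" where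
  "vnorm2 x = (\<Sum>i<2. (cmod (x i))\<^sup>2)"

definition outer :: "(nat \<Rightarrow> complex) \<Rightarrow> (nat \<Rightarrow> complex) \<Rightarrow> nat \<Rightarrow> nat \<Rightarrow> complex" where
  "outer x y i j = x i * cnj (y j)"

definition rank_one_form ::
    "tensor \<Rightarrow> (nat \<Rightarrow> complex) \<Rightarrow> (nat \<Rightarrow> complex) \<Rightarrow> (nat \<Rightarrow> complex) \<Rightarrow> (nat \<Rightarrow> complex) \<Rightarrow> complex" where
  "rank_one_form f u w x y = (\<Sum>i<2. \<Sum>j<2. cnj (u i) * tensor_apply f (outer x y) i j * w j)"

definition tensor_trace :: "tensor \<Rightarrow> complex" where
  "tensor_trace f = (\<Sum>k<2. \<Sum>l<2. f k l k l)"

definition unital_tensor :: "tensor \<Rightarrow> bool" where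
  "unital_tensor f \<longleftrightarrow> (\<forall>i<2. \<forall>j<2. f i j 0 0 + f i j 1 1 = (if i = j then 1 else 0))"

definition herm_tensor :: "tensor \<Rightarrow> bool" where
  "herm_tensor f \<longleftrightarrow> (\<forall>i<2. \<forall>j<2. \<forall>k<2. \<forall>l<2. cnj (f i j k l) = f j i l k)"

definition vec2 :: "complex \<Rightarrow> complex \<Rightarrow> nat \<Rightarrow> complex" where
  "vec2 p q i = (if i = 0 then p else q)"

definition perp2 :: "complex \<Rightarrow> complex \<Rightarrow> nat \<Rightarrow> complex" where
  "perp2 p q = vec2 (- cnj q) (cnj p)"

definition proj_diff :: "complex \<Rightarrow> complex \<Rightarrow> nat \<Rightarrow> nat \<Rightarrow> complex" where
  "proj_diff p q i j = outer (vec2 p q) (vec2 p q) i j - outer (perp2 p q) (perp2 p q) i j"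

lemma unital_tensorD:
  assumes "unital_tensor f"
  shows "f 0 0 (Suc 0) (Suc 0) = 1 - f 0 0 0 0" "f 0 (Suc 0) (Suc 0) (Suc 0) = - f 0 (Suc 0) 0 0"
    "f (Suc 0) 0 (Suc 0) (Suc 0) = - f (Suc 0) 0 0 0"
    "f (Suc 0) (Suc 0) (Suc 0) (Suc 0) = 1 - f (Suc 0) (Suc 0) 0 0"
  using assms unfolding unital_tensor_def
  by (auto simp: eq_diff_eq eq_neg_iff_add_eq_0 add.commute)

lemma hs_inner_self: "hs_inner A A = complex_of_real (hs_norm2 A)"
  unfolding hs_inner_def hs_norm2_def sum_lessThan_2 of_real_add complex_norm_square
  by (simp add: ac_simps)

lemma hs_norm2_nonneg: "0 \<le> hs_norm2 A"
  unfolding hs_norm2_def by (simp add: sum_nonneg)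

lemma vnorm2_nonneg: "0 \<le> vnorm2 x"
  unfolding vnorm2_def by (simp add: sum_nonneg)

lemma vnorm2_vec2: "vnorm2 (vec2 p q) = (cmod p)\<^sup>2 + (cmod q)\<^sup>2"
  and vnorm2_perp2: "vnorm2 (perp2 p q) = (cmod p)\<^sup>2 + (cmod q)\<^sup>2"
  unfolding vnorm2_def perp2_def vec2_def sum_lessThan_2 by simp_all

section \<open>The quotient on a difference of two orthogonal projections\<close>

lemma proj_diff_identities:
  fixes f :: tensor and p q :: complex
  defines "\<psi> \<equiv> vec2 p q" and "\<chi> \<equiv> perp2 p q" and "r \<equiv> p * cnj p + q * cnj q"
  assumes "unital_tensor f"
  shows "hs_inner (proj_diff p q) (proj_diff p q) = 2 * r\<^sup>2"
    and "hs_form f (proj_diff p q) =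
      2 * (rank_one_form f \<psi> \<psi> \<psi> \<psi> + rank_one_form f \<chi> \<chi> \<chi> \<chi>) - 2 * r\<^sup>2"
    and "rank_one_form f \<psi> \<psi> \<psi> \<psi> + rank_one_form f \<psi> \<psi> \<chi> \<chi> = r\<^sup>2"
    and "rank_one_form f \<chi> \<chi> \<chi> \<chi> + rank_one_form f \<chi> \<chi> \<psi> \<psi> = r\<^sup>2"
    and "r\<^sup>2 * tensor_trace f = rank_one_form f \<psi> \<psi> \<psi> \<psi> + rank_one_form f \<chi> \<chi> \<chi> \<chi>
      + rank_one_form f \<chi> \<psi> \<chi> \<psi> + rank_one_form f \<psi> \<chi> \<psi> \<chi>"
  unfolding \<psi>_def \<chi>_def r_def proj_diff_def rank_one_form_def hs_form_def tensor_apply_def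
    hs_inner_def tensor_trace_def outer_def perp2_def vec2_def sum_lessThan_2
  by (simp_all add: unital_tensorD[OF assms(4)] algebra_simps power2_eq_square)

lemma proj_diff_Re_identities:
  fixes f :: tensor and p q :: complex
  defines "\<psi> \<equiv> vec2 p q" and "\<chi> \<equiv> perp2 p q" and "R \<equiv> (cmod p)\<^sup>2 + (cmod q)\<^sup>2"
  assumes "unital_tensor f"
  shows "hs_norm2 (proj_diff p q) = 2 * R\<^sup>2"
    and "Re (hs_form f (proj_diff p q)) =
      2 * (Re (rank_one_form f \<psi> \<psi> \<psi> \<psi>) + Re (rank_one_form f \<chi> \<chi> \<chi> \<chi>)) - 2 * R\<^sup>2"
    and "Re (rank_one_form f \<psi> \<psi> \<psi> \<psi>) + Re (rank_one_form f \<psi> \<psi> \<chi> \<chi>) = R\<^sup>2"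
    and "Re (rank_one_form f \<chi> \<chi> \<chi> \<chi>) + Re (rank_one_form f \<chi> \<chi> \<psi> \<psi>) = R\<^sup>2"
    and "R\<^sup>2 * Re (tensor_trace f) = Re (rank_one_form f \<psi> \<psi> \<psi> \<psi>) + Re (rank_one_form f \<chi> \<chi> \<chi> \<chi>)
      + Re (rank_one_form f \<chi> \<psi> \<chi> \<psi>) + Re (rank_one_form f \<psi> \<chi> \<psi> \<chi>)"
proof -
  have "p * cnj p + q * cnj q = complex_of_real R"
    unfolding R_def by (simp only: of_real_add of_real_power complex_norm_square[symmetric])
  note identities = proj_diff_identities[OF assms(4), of p q, folded \<psi>_def \<chi>_def, unfolded this]
  show "hs_norm2 (proj_diff p q) = 2 * R\<^sup>2"
    using arg_cong[OF identities(1), of Re] by (simp add: hs_inner_self flip: of_real_power)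
  show "Re (hs_form f (proj_diff p q)) =
      2 * (Re (rank_one_form f \<psi> \<psi> \<psi> \<psi>) + Re (rank_one_form f \<chi> \<chi> \<chi> \<chi>)) - 2 * R\<^sup>2"
    using arg_cong[OF identities(2), of Re] by (simp flip: of_real_power)
  show "Re (rank_one_form f \<psi> \<psi> \<psi> \<psi>) + Re (rank_one_form f \<psi> \<psi> \<chi> \<chi>) = R\<^sup>2"
    using arg_cong[OF identities(3), of Re] by (simp flip: of_real_power)
  show "Re (rank_one_form f \<chi> \<chi> \<chi> \<chi>) + Re (rank_one_form f \<chi> \<chi> \<psi> \<psi>) = R\<^sup>2"
    using arg_cong[OF identities(4), of Re] by (simp flip: of_real_power)
  show "R\<^sup>2 * Re (tensor_trace f) = Re (rank_one_form f \<psi> \<psi> \<psi> \<psi>) + Re (rank_one_form f \<chi> \<chi> \<chi> \<chi>)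
      + Re (rank_one_form f \<chi> \<psi> \<chi> \<psi>) + Re (rank_one_form f \<psi> \<chi> \<psi> \<chi>)"
    using arg_cong[OF identities(5), of Re] by (simp flip: of_real_power)
qed

lemma proj_diff_form_le_norm:
  assumes "unital_tensor f" and "\<And>u x. 0 \<le> Re (rank_one_form f u u x x)"
  shows "Re (hs_form f (proj_diff p q)) \<le> hs_norm2 (proj_diff p q)"
  using proj_diff_Re_identities[OF assms(1), of p q]
    assms(2)[of "vec2 p q" "perp2 p q"] assms(2)[of "perp2 p q" "vec2 p q"]
  by (simp add: algebra_simps)

lemma rank_one_form_uminus:
  "rank_one_form f (\<lambda>i. - u i) w x y = - rank_one_form f u w x y"
  "rank_one_form f u (\<lambda>i. - w i) x y = - rank_one_form f u w x y"
  unfolding rank_one_form_def sum_lessThan_2 by (simp_all add: algebra_simps)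

lemma proj_diff_form_ge_choi:
  assumes "unital_tensor f"
    and choi: "\<And>u v x y. 0 \<le> Re (rank_one_form f u u x x + rank_one_form f u v x y
      + rank_one_form f v u y x + rank_one_form f v v y y)"
  shows "(Re (tensor_trace f) - 2) * hs_norm2 (proj_diff p q) \<le> 2 * Re (hs_form f (proj_diff p q))"
proof -
  have "0 \<le> Re (rank_one_form f (vec2 p q) (vec2 p q) (vec2 p q) (vec2 p q))
      + Re (rank_one_form f (perp2 p q) (perp2 p q) (perp2 p q) (perp2 p q))
      - Re (rank_one_form f (perp2 p q) (vec2 p q) (perp2 p q) (vec2 p q))
      - Re (rank_one_form f (vec2 p q) (perp2 p q) (vec2 p q) (perp2 p q))"
    using choi[where u = "vec2 p q" and v = "\<lambda>i. - perp2 p q i" and x = "vec2 p q" and y = "perp2 p q"]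
    by (simp add: rank_one_form_uminus)
  then show ?thesis
    using proj_diff_Re_identities[OF assms(1), of p q] by (simp add: algebra_simps power2_eq_square)
qed

lemma double_le_of_square_le_mult:
  fixes R A s :: real
  assumes "0 \<le> R" and "0 \<le> A" and "s\<^sup>2 \<le> 2 * R * A"
  shows "2 * s \<le> A + 2 * R"
proof (cases "R = 0")
  case False
  have "(s - 2 * R)\<^sup>2 \<le> 2 * R * (A + 2 * R - 2 * s)"
    using assms(3) by (simp add: algebra_simps power2_eq_square)
  then have "0 \<le> 2 * R * (A + 2 * R - 2 * s)"
    using zero_le_power2 order_trans by blast
  then show ?thesis
    using False assms(1) by (simp add: zero_le_mult_iff)
qed (use assms in simp)

lemma proj_diff_form_ge_schwarz:
  assumes "unital_tensor f" and pos: "\<And>u x. 0 \<le> Re (rank_one_form f u u x x)"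
    and schwarz: "\<And>x y u w. (cmod (rank_one_form f w u x y))\<^sup>2
      \<le> vnorm2 x * vnorm2 w * Re (rank_one_form f u u y y)"
  shows "(2 * Re (tensor_trace f) - 5) * hs_norm2 (proj_diff p q) \<le> 3 * Re (hs_form f (proj_diff p q))"
proof -
  define R where "R = (cmod p)\<^sup>2 + (cmod q)\<^sup>2"
  define a where "a = Re (rank_one_form f (vec2 p q) (vec2 p q) (vec2 p q) (vec2 p q))"
  define b where "b = Re (rank_one_form f (perp2 p q) (perp2 p q) (perp2 p q) (perp2 p q))"
  define c where "c = rank_one_form f (perp2 p q) (vec2 p q) (perp2 p q) (vec2 p q)"
  define d where "d = rank_one_form f (vec2 p q) (perp2 p q) (vec2 p q) (perp2 p q)"
  have "(cmod c)\<^sup>2 \<le> R\<^sup>2 * a" "(cmod d)\<^sup>2 \<le> R\<^sup>2 * b"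
    using schwarz[where x = "perp2 p q" and y = "vec2 p q" and u = "vec2 p q" and w = "perp2 p q"]
      schwarz[where x = "vec2 p q" and y = "perp2 p q" and u = "perp2 p q" and w = "vec2 p q"]
    unfolding vnorm2_vec2 vnorm2_perp2 a_def b_def c_def d_def R_def
    by (simp_all add: power2_eq_square)
  moreover have "(Re c)\<^sup>2 \<le> (cmod c)\<^sup>2" "(Re d)\<^sup>2 \<le> (cmod d)\<^sup>2"
    by (simp_all add: cmod_power2)
  moreover have "(Re c + Re d)\<^sup>2 \<le> 2 * ((Re c)\<^sup>2 + (Re d)\<^sup>2)"
    using sum_squares_ge_zero[of "Re c - Re d" 0] by (simp add: power2_eq_square algebra_simps)
  ultimately have "(Re c + Re d)\<^sup>2 \<le> 2 * R\<^sup>2 * (a + b)"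
    by (simp add: algebra_simps)
  moreover have "0 \<le> a" "0 \<le> b"
    using pos unfolding a_def b_def by auto
  ultimately have "2 * (Re c + Re d) \<le> a + b + 2 * R\<^sup>2"
    by (intro double_le_of_square_le_mult) auto
  then show ?thesis
    using proj_diff_Re_identities[OF assms(1), of p q, folded R_def a_def b_def c_def d_def]
    by (simp add: algebra_simps power2_eq_square)
qed

section \<open>The real part of an eigenvalue as an average of quotients\<close>

definition traceless2 :: "complex \<Rightarrow> complex \<Rightarrow> complex \<Rightarrow> nat \<Rightarrow> nat \<Rightarrow> complex" where
  "traceless2 a b c i j = (if i = 0 then (if j = 0 then a else b) else (if j = 0 then c else - a))"

definition traceless_herm :: "real \<Rightarrow> complex \<Rightarrow> nat \<Rightarrow> nat \<Rightarrow> complex" where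
  "traceless_herm h z = traceless2 (complex_of_real h) z (cnj z)"

lemma traceless_herm_eq_proj_diff: "\<exists>p q. proj_diff p q = traceless_herm h z"
proof -
  have proj_diff_eq: "proj_diff p q = traceless_herm h z"
    if "p * cnj p - q * cnj q = complex_of_real h" and "2 * p * cnj q = z" for p q
  proof -
    have "2 * q * cnj p = cnj z"
      using arg_cong[OF that(2), of cnj] by (simp add: ac_simps)
    then show ?thesis
      using that unfolding proj_diff_def traceless_herm_def traceless2_def outer_def perp2_def vec2_def
      by (intro ext) (auto simp: algebra_simps)
  qed
  define r where "r = sqrt (h\<^sup>2 + (cmod z)\<^sup>2)"
  have r_square: "r\<^sup>2 = h\<^sup>2 + (cmod z)\<^sup>2" and "\<bar>h\<bar> \<le> r"
    unfolding r_def by (simp_all add: real_le_rsqrt)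
  show ?thesis
  proof (cases "r + h = 0")
    case True
    then have "(cmod z)\<^sup>2 = 0"
      using r_square by (simp add: eq_neg_iff_add_eq_0[symmetric])
    moreover have "0 \<le> r"
      using \<open>\<bar>h\<bar> \<le> r\<close> by linarith
    ultimately have "proj_diff 0 (sqrt r) = traceless_herm h z"
      using True by (intro proj_diff_eq) (simp_all flip: of_real_mult add: eq_neg_iff_add_eq_0)
    then show ?thesis by blast
  next
    case False
    then have "0 < r + h"
      using \<open>\<bar>h\<bar> \<le> r\<close> by linarith
    define p where "p = complex_of_real (sqrt ((r + h) / 2))"
    have "p \<noteq> 0" and "cnj p = p" and p_norm: "(cmod p)\<^sup>2 = (r + h) / 2"
      unfolding p_def using \<open>0 < r + h\<close> by simp_all
    define q where "q = cnj z / (2 * p)"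
    have "(cmod z)\<^sup>2 = (r - h) * (r + h)"
      using r_square by (simp add: algebra_simps power2_eq_square)
    then have "(cmod q)\<^sup>2 = (r - h) / 2"
      unfolding q_def norm_divide norm_mult power_divide power_mult_distrib p_norm
      using \<open>0 < r + h\<close> by (simp add: field_simps)
    then have "(cmod p)\<^sup>2 - (cmod q)\<^sup>2 = h"
      unfolding p_norm by (simp add: field_simps)
    then have "p * cnj p - q * cnj q = complex_of_real h"
      by (metis complex_norm_square of_real_diff)
    moreover have "2 * p * cnj q = z"
      unfolding q_def using \<open>p \<noteq> 0\<close> \<open>cnj p = p\<close> by (simp add: field_simps)
    ultimately show ?thesis
      using proj_diff_eq by blast
  qed
qed

lemma hs_form_traceless_eigen:
  assumes "unital_tensor f" and eigen: "\<forall>i<2. \<forall>j<2. tensor_apply f V i j = lam * V i j"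
  defines "W \<equiv> traceless2 ((V 0 0 - V 1 1) / 2) (V 0 1) (V 1 0)"
  shows "hs_form f W = lam * hs_inner W W"
proof -
  define t where "t = (V 0 0 + V 1 1) / 2"
  have W: "W k l = V k l - (if k = l then t else 0)" if "k < 2" "l < 2" for k l
    using less_2_cases[OF that(1)] less_2_cases[OF that(2)]
    unfolding W_def traceless2_def t_def by (auto simp: field_simps)
  have "tensor_apply f W i j = lam * V i j - (if i = j then t else 0)" if "i < 2" "j < 2" for i j
  proof -
    have "tensor_apply f W i j = tensor_apply f V i j - t * (f i j 0 0 + f i j 1 1)"
      unfolding tensor_apply_def sum_lessThan_2 by (simp add: W algebra_simps)
    also have "f i j 0 0 + f i j 1 1 = (if i = j then 1 else 0)"
      using assms(1) that unfolding unital_tensor_def by blast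
    finally show ?thesis
      using eigen that by simp
  qed
  then have "hs_form f W = (\<Sum>i<2. \<Sum>j<2. cnj (W i j) * (lam * V i j - (if i = j then t else 0)))"
    unfolding hs_form_def hs_inner_def by (intro sum.cong) simp_all
  also have "\<dots> = lam * hs_inner W W"
    unfolding hs_inner_def sum_lessThan_2 W_def traceless2_def t_def by (simp add: field_simps)
  finally show ?thesis .
qed

lemma traceless_part_nonzero:
  assumes "unital_tensor f" and eigen: "\<forall>i<2. \<forall>j<2. tensor_apply f V i j = lam * V i j"
    and "\<exists>i<2. \<exists>j<2. V i j \<noteq> 0" and "lam \<noteq> 1"
  shows "0 < hs_norm2 (traceless2 ((V 0 0 - V 1 1) / 2) (V 0 1) (V 1 0))"
proof (rule ccontr)
  assume "\<not> ?thesis"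
  then have "hs_norm2 (traceless2 ((V 0 0 - V 1 1) / 2) (V 0 1) (V 1 0)) = 0"
    using hs_norm2_nonneg by (metis not_less order.antisym)
  then have V: "V 0 1 = 0" "V 1 0 = 0" "V 1 1 = V 0 0"
    unfolding hs_norm2_def traceless2_def sum_lessThan_2 by (simp_all add: add_nonneg_eq_0_iff)
  have "tensor_apply f V 0 0 = V 0 0"
    unfolding tensor_apply_def sum_lessThan_2 V by (simp add: unital_tensorD[OF assms(1)] algebra_simps)
  then have "V 0 0 = 0"
    using eigen \<open>lam \<noteq> 1\<close> by simp
  then show False
    using assms(3) V by (auto dest!: less_2_cases)
qed

lemma hs_form_conj_transpose:
  assumes "herm_tensor f"
  shows "cnj (hs_form f A) = hs_form f (\<lambda>i j. cnj (A j i))"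
  using assms unfolding herm_tensor_def hs_form_def hs_inner_def tensor_apply_def sum_lessThan_2
  by (simp add: algebra_simps)

lemma hs_form_parallelogram:
  "hs_form f (\<lambda>i j. A i j + \<i> * C i j) + hs_form f (\<lambda>i j. A i j - \<i> * C i j)
    = 2 * hs_form f A + 2 * hs_form f C"
  unfolding hs_form_def hs_inner_def tensor_apply_def sum_lessThan_2 by (simp add: algebra_simps)

lemma hs_inner_parallelogram:
  "hs_inner (\<lambda>i j. A i j + \<i> * C i j) (\<lambda>i j. A i j + \<i> * C i j)
    + hs_inner (\<lambda>i j. A i j - \<i> * C i j) (\<lambda>i j. A i j - \<i> * C i j) = 2 * hs_inner A A + 2 * hs_inner C C"
  unfolding hs_inner_def sum_lessThan_2 by (simp add: algebra_simps)

lemma hs_norm2_conj_transpose: "hs_norm2 (\<lambda>i j. cnj (A j i)) = hs_norm2 A"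
  unfolding hs_norm2_def sum_lessThan_2 by simp

lemma traceless_split_herm:
  fixes a b c :: complex
  assumes "herm_tensor f"
  defines "H1 \<equiv> traceless_herm (Re a) ((b + cnj c) / 2)"
    and "H2 \<equiv> traceless_herm (Im a) (- \<i> * (b - cnj c) / 2)"
  shows "Re (hs_form f (traceless2 a b c)) = Re (hs_form f H1) + Re (hs_form f H2)"
    and "hs_norm2 (traceless2 a b c) = hs_norm2 H1 + hs_norm2 H2"
proof -
  let ?W = "traceless2 a b c"
  have W: "?W = (\<lambda>i j. H1 i j + \<i> * H2 i j)"
    and W_adj: "(\<lambda>i j. cnj (?W j i)) = (\<lambda>i j. H1 i j - \<i> * H2 i j)"
    unfolding H1_def H2_def traceless_herm_def traceless2_def
    by (intro ext; auto simp: field_simps complex_eq_iff)+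
  have "2 * Re (hs_form f ?W) = Re (hs_form f ?W + cnj (hs_form f ?W))"
    by simp
  also have "\<dots> = 2 * Re (hs_form f H1) + 2 * Re (hs_form f H2)"
    unfolding hs_form_conj_transpose[OF assms(1)] W_adj
    by (subst (1) W, simp only: hs_form_parallelogram) simp
  finally show "Re (hs_form f ?W) = Re (hs_form f H1) + Re (hs_form f H2)"
    by simp
  have "complex_of_real (2 * hs_norm2 ?W)
      = hs_inner ?W ?W + hs_inner (\<lambda>i j. cnj (?W j i)) (\<lambda>i j. cnj (?W j i))"
    unfolding hs_inner_self hs_norm2_conj_transpose by simp
  also have "\<dots> = complex_of_real (2 * hs_norm2 H1 + 2 * hs_norm2 H2)"
    unfolding W_adj by (subst (1 2) W, simp only: hs_inner_parallelogram) (simp add: hs_inner_self)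
  finally show "hs_norm2 ?W = hs_norm2 H1 + hs_norm2 H2"
    by (simp only: of_real_eq_iff)
qed

lemma Re_eigenvalue_bound:
  assumes "unital_tensor f" and "herm_tensor f"
    and eigen: "\<forall>i<2. \<forall>j<2. tensor_apply f V i j = lam * V i j"
    and "\<exists>i<2. \<exists>j<2. V i j \<noteq> 0" and "lam \<noteq> 1"
    and bound: "\<And>p q. c0 * hs_norm2 (proj_diff p q) \<le> c1 * Re (hs_form f (proj_diff p q))"
  shows "c0 \<le> c1 * Re lam"
proof -
  define W where "W = traceless2 ((V 0 0 - V 1 1) / 2) (V 0 1) (V 1 0)"
  have "hs_form f W = lam * complex_of_real (hs_norm2 W)"
    using hs_form_traceless_eigen[OF assms(1) eigen] unfolding W_def hs_inner_self .
  then have form: "Re (hs_form f W) = Re lam * hs_norm2 W"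
    by simp
  have bound_herm: "c0 * hs_norm2 (traceless_herm h z) \<le> c1 * Re (hs_form f (traceless_herm h z))" for h z
    using traceless_herm_eq_proj_diff[of h z] bound by metis
  have "c0 * hs_norm2 W \<le> c1 * Re (hs_form f W)"
    unfolding W_def traceless_split_herm[OF assms(2)] distrib_left
    by (intro add_mono bound_herm)
  then show ?thesis
    unfolding form using traceless_part_nonzero[OF assms(1) eigen assms(4,5), folded W_def]
    by (simp add: mult.assoc[symmetric])
qed

section \<open>Positive semidefinite matrices\<close>

definition sesq :: "nat \<Rightarrow> (nat \<Rightarrow> complex) \<Rightarrow> complex mat \<Rightarrow> (nat \<Rightarrow> complex) \<Rightarrow> complex" where
  "sesq n u A w = (\<Sum>i<n. \<Sum>j<n. cnj (u i) * A $$ (i,j) * w j)"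

lemma adj_mat_dim [simp]: "dim_row (adj_mat A) = dim_col A" "dim_col (adj_mat A) = dim_row A"
  unfolding adj_mat_def by simp_all

lemma adj_mat_entry: "i < dim_col A \<Longrightarrow> j < dim_row A \<Longrightarrow> adj_mat A $$ (i,j) = cnj (A $$ (j,i))"
  unfolding adj_mat_def by simp

lemma adj_mat_carrier: "A \<in> carrier_mat n m \<Longrightarrow> adj_mat A \<in> carrier_mat m n"
  unfolding adj_mat_def by simp

lemma adj_mat_add:
  assumes "A \<in> carrier_mat n m" and "B \<in> carrier_mat n m"
  shows "adj_mat (A + B) = adj_mat A + adj_mat B"
  using assms by (intro eq_matI) (auto simp: adj_mat_entry)

lemma psd_sesq_nonneg: "psd n A \<Longrightarrow> 0 \<le> Re (sesq n v A v)"
  unfolding psd_def sesq_def by blast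

lemma psd_herm_entry:
  assumes "psd n A" and "i < n" and "j < n"
  shows "cnj (A $$ (j,i)) = A $$ (i,j)"
proof -
  have carrier: "A \<in> carrier_mat n n" and adj: "adj_mat A = A"
    using assms(1) unfolding psd_def by auto
  have "adj_mat A $$ (i,j) = cnj (A $$ (j,i))"
    using carrier assms(2,3) by (intro adj_mat_entry) auto
  then show ?thesis
    using adj by simp
qed

lemma sesq_add:
  assumes "A \<in> carrier_mat n n" and "B \<in> carrier_mat n n"
  shows "sesq n u (A + B) w = sesq n u A w + sesq n u B w"
  using assms unfolding sesq_def by (simp add: algebra_simps sum.distrib)

lemma sesq_minus:
  assumes "A \<in> carrier_mat n n" and "B \<in> carrier_mat n n"
  shows "sesq n u (A - B) w = sesq n u A w - sesq n u B w"
  using assms unfolding sesq_def by (simp add: algebra_simps sum_subtractf)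

lemma sesq_smult:
  assumes "A \<in> carrier_mat n n"
  shows "sesq n u (c \<cdot>\<^sub>m A) w = c * sesq n u A w"
  using assms unfolding sesq_def by (simp add: sum_distrib_left algebra_simps)

lemma psd_add:
  assumes "psd n A" and "psd n B"
  shows "psd n (A + B)"
proof -
  have A: "A \<in> carrier_mat n n" and B: "B \<in> carrier_mat n n"
    using assms unfolding psd_def by auto
  show ?thesis
    using assms unfolding psd_def adj_mat_add[OF A B]
    by (auto simp: sesq_add[OF A B, unfolded sesq_def])
qed

lemma adj_mat_mult_self_entry:
  assumes "G \<in> carrier_mat n n" and "i < n" and "j < n"
  shows "(adj_mat G * G) $$ (i,j) = (\<Sum>m<n. cnj (G $$ (m,i)) * G $$ (m,j))"
  using assms by (simp add: scalar_prod_def lessThan_atLeast0 adj_mat_entry)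

lemma cnj_sum_mult_sum: "cnj (\<Sum>i\<in>A. a i) * (\<Sum>j\<in>A. a j) = (\<Sum>i\<in>A. \<Sum>j\<in>A. cnj (a i) * a j)"
  by (simp only: cnj_sum sum_product)

lemma sesq_adj_mult_self:
  assumes "G \<in> carrier_mat n n"
  shows "sesq n u (adj_mat G * G) u = complex_of_real (\<Sum>m<n. (cmod (\<Sum>j<n. G $$ (m,j) * u j))\<^sup>2)"
proof -
  define g where "g m = (\<Sum>j<n. G $$ (m,j) * u j)" for m
  have "sesq n u (adj_mat G * G) u
      = (\<Sum>i<n. \<Sum>j<n. \<Sum>m<n. cnj (G $$ (m,i) * u i) * (G $$ (m,j) * u j))"
    unfolding sesq_def
    by (intro sum.cong refl)
      (simp add: adj_mat_mult_self_entry[OF assms] sum_distrib_left sum_distrib_right ac_simps)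
  also have "\<dots> = (\<Sum>i<n. \<Sum>m<n. \<Sum>j<n. cnj (G $$ (m,i) * u i) * (G $$ (m,j) * u j))"
    by (intro sum.cong refl sum.swap)
  also have "\<dots> = (\<Sum>m<n. \<Sum>i<n. \<Sum>j<n. cnj (G $$ (m,i) * u i) * (G $$ (m,j) * u j))"
    by (rule sum.swap)
  also have "\<dots> = (\<Sum>m<n. cnj (g m) * g m)"
    unfolding g_def cnj_sum_mult_sum ..
  also have "\<dots> = complex_of_real (\<Sum>m<n. (cmod (g m))\<^sup>2)"
    by (simp only: of_real_sum complex_norm_square mult.commute)
  finally show ?thesis
    unfolding g_def .
qed

lemma psd_adj_mult_self:
  assumes "G \<in> carrier_mat n n"
  shows "psd n (adj_mat G * G)"
proof -
  have carrier: "adj_mat G * G \<in> carrier_mat n n"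
    using adj_mat_carrier[OF assms] assms by (rule mult_carrier_mat)
  have "adj_mat (adj_mat G * G) = adj_mat G * G"
  proof (rule eq_matI)
    fix i j assume "i < dim_row (adj_mat G * G)" and "j < dim_col (adj_mat G * G)"
    then show "adj_mat (adj_mat G * G) $$ (i,j) = (adj_mat G * G) $$ (i,j)"
      using carrier_matD[OF carrier]
      by (simp add: adj_mat_entry adj_mat_mult_self_entry[OF assms] mult.commute del: index_mult_mat)
  qed (use carrier in auto)
  then show ?thesis
    using carrier sesq_adj_mult_self[OF assms] unfolding psd_def sesq_def
    by (auto intro: sum_nonneg)
qed

lemma psd_outer_product: "psd n (mat n n (\<lambda>(i,j). z i * cnj (z j)))"
proof -
  let ?A = "mat n n (\<lambda>(i,j). z i * cnj (z j))"
  have "sesq n v ?A v = cnj (\<Sum>i<n. cnj (z i) * v i) * (\<Sum>j<n. cnj (z j) * v j)" for v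
    unfolding sesq_def cnj_sum_mult_sum by (intro sum.cong refl) (simp add: ac_simps)
  then have "Re (sesq n v ?A v) = (cmod (\<Sum>j<n. cnj (z j) * v j))\<^sup>2" for v
    by (simp only: complex_norm_square[symmetric] mult.commute[of "cnj _"] Re_complex_of_real)
  moreover have "adj_mat ?A = ?A"
    by (intro eq_matI) (auto simp: adj_mat_entry)
  ultimately show ?thesis
    unfolding psd_def sesq_def by auto
qed

section \<open>From the map to its tensor\<close>

definition matrix_unit :: "nat \<Rightarrow> nat \<Rightarrow> complex mat" where
  "matrix_unit k l = mat 2 2 (\<lambda>(a,b). if (a,b) = (k,l) then 1 else 0)"

definition map_tensor :: "(complex mat \<Rightarrow> complex mat) \<Rightarrow> tensor" where
  "map_tensor \<Phi> i j k l = \<Phi> (matrix_unit k l) $$ (i,j)"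

definition outer_mat :: "(nat \<Rightarrow> complex) \<Rightarrow> (nat \<Rightarrow> complex) \<Rightarrow> complex mat" where
  "outer_mat x y = mat 2 2 (\<lambda>(i,j). outer x y i j)"

lemma matrix_unit_carrier [simp]: "matrix_unit k l \<in> carrier_mat 2 2"
  and outer_mat_carrier [simp]: "outer_mat x y \<in> carrier_mat 2 2"
  unfolding matrix_unit_def outer_mat_def by simp_all

lemma outer_mat_index [simp]:
  "dim_row (outer_mat x y) = 2" "dim_col (outer_mat x y) = 2"
  "i < 2 \<Longrightarrow> j < 2 \<Longrightarrow> outer_mat x y $$ (i,j) = x i * cnj (y j)"
  unfolding outer_mat_def outer_def by simp_all

lemma mat2_eq_sum_matrix_units:
  assumes "X \<in> carrier_mat 2 2"
  shows "X = X $$ (0,0) \<cdot>\<^sub>m matrix_unit 0 0 + X $$ (0,1) \<cdot>\<^sub>m matrix_unit 0 1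
    + X $$ (1,0) \<cdot>\<^sub>m matrix_unit 1 0 + X $$ (1,1) \<cdot>\<^sub>m matrix_unit 1 1"
  using assms unfolding matrix_unit_def by (intro eq_matI) (auto dest!: less_2_cases)

lemma map_entry:
  assumes "linear_map_M2 \<Phi>" and "X \<in> carrier_mat 2 2" and "i < 2" and "j < 2"
  shows "\<Phi> X $$ (i,j) = (\<Sum>k<2. \<Sum>l<2. map_tensor \<Phi> i j k l * X $$ (k,l))"
proof -
  have expand: "\<Phi> X = X $$ (0,0) \<cdot>\<^sub>m \<Phi> (matrix_unit 0 0) + X $$ (0,1) \<cdot>\<^sub>m \<Phi> (matrix_unit 0 1)
      + X $$ (1,0) \<cdot>\<^sub>m \<Phi> (matrix_unit 1 0) + X $$ (1,1) \<cdot>\<^sub>m \<Phi> (matrix_unit 1 1)"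
    using assms(1) by (subst mat2_eq_sum_matrix_units[OF assms(2)]) (simp add: linear_map_M2_def)
  have carrier: "\<Phi> (matrix_unit k l) \<in> carrier_mat 2 2" for k l
    using assms(1) unfolding linear_map_M2_def by simp
  show ?thesis
    unfolding expand using carrier[of 0 0] carrier[of 0 1] carrier[of 1 0] carrier[of 1 1] assms(3,4)
    unfolding map_tensor_def sum_lessThan_2 by (simp add: ac_simps)
qed

lemma map_outer_mat_entry:
  assumes "linear_map_M2 \<Phi>" and "i < 2" and "j < 2"
  shows "\<Phi> (outer_mat x y) $$ (i,j) = tensor_apply (map_tensor \<Phi>) (outer x y) i j"
  unfolding map_entry[OF assms(1) outer_mat_carrier assms(2,3)] tensor_apply_def
  by (intro sum.cong refl) (simp add: outer_def)

lemma sesq_map_outer_mat: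
  assumes "linear_map_M2 \<Phi>"
  shows "sesq 2 u (\<Phi> (outer_mat x y)) w = rank_one_form (map_tensor \<Phi>) u w x y"
  unfolding sesq_def rank_one_form_def
  by (intro sum.cong refl) (simp add: map_outer_mat_entry[OF assms])

lemma unital_map_tensor:
  assumes "linear_map_M2 \<Phi>" and "unital_M2 \<Phi>"
  shows "unital_tensor (map_tensor \<Phi>)"
  unfolding unital_tensor_def
proof (intro allI impI)
  fix i j :: nat assume "i < 2" and "j < 2"
  then have "\<Phi> (1\<^sub>m 2) $$ (i,j) = map_tensor \<Phi> i j 0 0 + map_tensor \<Phi> i j 1 1"
    using map_entry[OF assms(1)] unfolding sum_lessThan_2 by simp
  then show "map_tensor \<Phi> i j 0 0 + map_tensor \<Phi> i j 1 1 = (if i = j then 1 else 0)"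
    using assms(2) \<open>i < 2\<close> \<open>j < 2\<close> unfolding unital_M2_def by simp
qed

text \<open>Hermitian matrices are spanned by the rank-one projections onto \<open>(1, 0)\<close>, \<open>(0, 1)\<close>,
  \<open>(1, 1)\<close> and \<open>(1, i)\<close>.\<close>

lemma herm_tensor_of_herm_rank_one:
  assumes herm: "\<And>y i j. i < 2 \<Longrightarrow> j < 2 \<Longrightarrow>
    cnj (tensor_apply f (outer y y) j i) = tensor_apply f (outer y y) i j"
  shows "herm_tensor f"
proof -
  have entries: "cnj (f j i 0 0) = f i j 0 0" "cnj (f j i 1 1) = f i j 1 1" "cnj (f j i 0 1) = f i j 1 0"
    if "i < 2" "j < 2" for i j
  proof -
    note herm_at = herm[OF that, unfolded tensor_apply_def outer_def sum_lessThan_2]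
    show "cnj (f j i 0 0) = f i j 0 0" and "cnj (f j i 1 1) = f i j 1 1"
      using herm_at[of "vec2 1 0"] herm_at[of "vec2 0 1"] unfolding vec2_def by simp_all
    then have sum: "cnj (f j i 0 1) + cnj (f j i 1 0) = f i j 0 1 + f i j 1 0"
      and "\<i> * (f i j 0 1 + cnj (f j i 0 1)) = \<i> * (f i j 1 0 + cnj (f j i 1 0))"
      using herm_at[of "vec2 1 1"] herm_at[of "vec2 1 \<i>"] unfolding vec2_def
      by (simp_all add: algebra_simps)
    then have diff: "f i j 0 1 + cnj (f j i 0 1) = f i j 1 0 + cnj (f j i 1 0)"
      by simp
    have "2 * cnj (f j i 0 1) = (cnj (f j i 0 1) + cnj (f j i 1 0))
        + (f i j 0 1 + cnj (f j i 0 1)) - f i j 0 1 - cnj (f j i 1 0)"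
      by simp
    also have "\<dots> = 2 * f i j 1 0"
      unfolding sum diff by simp
    finally show "cnj (f j i 0 1) = f i j 1 0"
      by simp
  qed
  have "cnj (f j i 1 0) = f i j 0 1" if "i < 2" "j < 2" for i j
    using entries(3)[OF that(2,1)] by (metis complex_cnj_cnj)
  then show ?thesis
    unfolding herm_tensor_def using entries by (auto dest!: less_2_cases)
qed

lemma rank_one_positive_tensor:
  assumes "linear_map_M2 \<Phi>" and pos: "\<And>y. psd 2 (\<Phi> (outer_mat y y))"
  shows "0 \<le> Re (rank_one_form (map_tensor \<Phi>) u u x x)" and "herm_tensor (map_tensor \<Phi>)"
proof -
  show "0 \<le> Re (rank_one_form (map_tensor \<Phi>) u u x x)"
    using psd_sesq_nonneg[OF pos] unfolding sesq_map_outer_mat[OF assms(1)] .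
  show "herm_tensor (map_tensor \<Phi>)"
    using psd_herm_entry[OF pos]
    by (intro herm_tensor_of_herm_rank_one) (simp add: map_outer_mat_entry[OF assms(1)])
qed

section \<open>Positive, completely positive and Schwarz maps\<close>

lemma psd_outer_mat: "psd 2 (outer_mat y y)"
  unfolding outer_mat_def outer_def by (rule psd_outer_product)

lemma positive_map_rank_one: "positive_map \<Phi> \<Longrightarrow> psd 2 (\<Phi> (outer_mat y y))"
  using psd_outer_mat unfolding positive_map_def by blast

lemma ampliate_1:
  assumes "linear_map_M2 \<Phi>" and "X \<in> carrier_mat 2 2"
  shows "ampliate 1 \<Phi> X = \<Phi> X"
proof -
  have "\<Phi> X \<in> carrier_mat 2 2" and "block2 X 0 0 = X"
    using assms unfolding linear_map_M2_def block2_def by (auto intro!: eq_matI)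
  then show ?thesis
    unfolding ampliate_def by (intro eq_matI) auto
qed

lemma completely_positive_rank_one:
  assumes "linear_map_M2 \<Phi>" and "completely_positive \<Phi>"
  shows "psd 2 (\<Phi> (outer_mat y y))"
  using assms(2) psd_outer_mat[of y] ampliate_1[OF assms(1) outer_mat_carrier]
  unfolding completely_positive_def by (metis mult_1_right)

lemma sum_lessThan_4: "(\<Sum>a<4. g a) = g 0 + g 1 + g 2 + g (3::nat)"
  by (simp add: eval_nat_numeral)

lemma completely_positive_choi:
  assumes "linear_map_M2 \<Phi>" and "completely_positive \<Phi>"
  shows "0 \<le> Re (rank_one_form (map_tensor \<Phi>) u u x x + rank_one_form (map_tensor \<Phi>) u v x y
    + rank_one_form (map_tensor \<Phi>) v u y x + rank_one_form (map_tensor \<Phi>) v v y y)"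
proof -
  define z where "z a = (if a < 2 then x a else y (a - 2))" for a :: nat
  define w where "w a = (if a < 2 then u a else v (a - 2))" for a :: nat
  define Z where "Z = mat 4 4 (\<lambda>(a,b). z a * cnj (z b))"
  have "psd (2 * 2) Z"
    using psd_outer_product[of 4 z] unfolding Z_def by simp
  then have "psd 4 (ampliate 2 \<Phi> Z)"
    using assms(2) unfolding completely_positive_def by fastforce
  then have "0 \<le> Re (sesq 4 w (ampliate 2 \<Phi> Z) w)"
    by (rule psd_sesq_nonneg)
  moreover have "block2 Z 0 0 = outer_mat x x" "block2 Z 0 1 = outer_mat x y"
    "block2 Z 1 0 = outer_mat y x" "block2 Z 1 1 = outer_mat y y"
    unfolding block2_def outer_mat_def outer_def Z_def z_def by (auto intro!: eq_matI)
  then have "sesq 4 w (ampliate 2 \<Phi> Z) w = sesq 2 u (\<Phi> (outer_mat x x)) u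
      + sesq 2 u (\<Phi> (outer_mat x y)) v + sesq 2 v (\<Phi> (outer_mat y x)) u + sesq 2 v (\<Phi> (outer_mat y y)) v"
    unfolding sesq_def sum_lessThan_4 sum_lessThan_2 ampliate_def w_def
    by (simp add: algebra_simps)
  ultimately show ?thesis
    unfolding sesq_map_outer_mat[OF assms(1)] by simp
qed

lemma adj_outer_mat_mult_outer_mat:
  "adj_mat (outer_mat x y) * outer_mat x y = complex_of_real (vnorm2 x) \<cdot>\<^sub>m outer_mat y y"
proof (rule eq_matI)
  fix k l assume "k < dim_row (complex_of_real (vnorm2 x) \<cdot>\<^sub>m outer_mat y y)"
    and "l < dim_col (complex_of_real (vnorm2 x) \<cdot>\<^sub>m outer_mat y y)"
  then have "k < 2" "l < 2"
    by simp_all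
  have "complex_of_real (vnorm2 x) = (\<Sum>m<2. cnj (x m) * x m)"
    unfolding vnorm2_def sum_lessThan_2 of_real_add complex_norm_square by (simp add: ac_simps)
  then show "(adj_mat (outer_mat x y) * outer_mat x y) $$ (k,l)
      = (complex_of_real (vnorm2 x) \<cdot>\<^sub>m outer_mat y y) $$ (k,l)"
    using \<open>k < 2\<close> \<open>l < 2\<close>
    by (simp add: adj_mat_mult_self_entry[OF outer_mat_carrier] sum_lessThan_2 algebra_simps
      del: index_mult_mat)
qed simp_all

lemma schwarz_map_outer_mat:
  assumes "linear_map_M2 \<Phi>" and "schwarz_map \<Phi>"
  shows "psd 2 (complex_of_real (vnorm2 x) \<cdot>\<^sub>m \<Phi> (outer_mat y y)
    - adj_mat (\<Phi> (outer_mat x y)) * \<Phi> (outer_mat x y))"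
  using assms unfolding schwarz_map_def linear_map_M2_def
  by (metis adj_outer_mat_mult_outer_mat outer_mat_carrier)

text \<open>The Schwarz inequality for \<open>X = e\<^sub>0 y\<^sup>*\<close> writes \<open>\<Phi>(y y\<^sup>*)\<close> as a sum of two positive
  semidefinite matrices.\<close>

lemma schwarz_map_rank_one:
  assumes "linear_map_M2 \<Phi>" and "schwarz_map \<Phi>"
  shows "psd 2 (\<Phi> (outer_mat y y))"
proof -
  define G where "G = \<Phi> (outer_mat (vec2 1 0) y)"
  have carrier: "G \<in> carrier_mat 2 2" "\<Phi> (outer_mat y y) \<in> carrier_mat 2 2"
    using assms(1) unfolding G_def linear_map_M2_def by simp_all
  have "vnorm2 (vec2 1 0) = 1"
    unfolding vnorm2_def vec2_def sum_lessThan_2 by simp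
  moreover have "1 \<cdot>\<^sub>m \<Phi> (outer_mat y y) = \<Phi> (outer_mat y y)"
    using carrier(2) by (intro eq_matI) auto
  ultimately have "psd 2 (\<Phi> (outer_mat y y) - adj_mat G * G)"
    using schwarz_map_outer_mat[OF assms, of "vec2 1 0" y] unfolding G_def by simp
  then have "psd 2 ((\<Phi> (outer_mat y y) - adj_mat G * G) + adj_mat G * G)"
    using psd_adj_mult_self[OF carrier(1)] by (rule psd_add)
  moreover have "(\<Phi> (outer_mat y y) - adj_mat G * G) + adj_mat G * G = \<Phi> (outer_mat y y)"
    using carrier adj_mat_carrier[OF carrier(1)] by (intro eq_matI) auto
  ultimately show ?thesis
    by simp
qed

lemma cauchy_schwarz_2:
  "(cmod (\<Sum>m<2. cnj (w m) * g m))\<^sup>2 \<le> vnorm2 w * (\<Sum>m<2. (cmod (g m))\<^sup>2)"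
proof -
  have "cmod (\<Sum>m<2. cnj (w m) * g m) \<le> cmod (w 0) * cmod (g 0) + cmod (w 1) * cmod (g 1)"
    unfolding sum_lessThan_2 by (metis complex_mod_cnj norm_mult norm_triangle_ineq)
  then have "(cmod (\<Sum>m<2. cnj (w m) * g m))\<^sup>2 \<le> (cmod (w 0) * cmod (g 0) + cmod (w 1) * cmod (g 1))\<^sup>2"
    by (simp add: power_mono)
  also have "\<dots> \<le> vnorm2 w * (\<Sum>m<2. (cmod (g m))\<^sup>2)"
    using zero_le_power2[of "cmod (w 0) * cmod (g 1) - cmod (w 1) * cmod (g 0)"]
    unfolding vnorm2_def sum_lessThan_2 by (simp add: algebra_simps power2_eq_square)
  finally show ?thesis .
qed

lemma schwarz_map_inequality:
  assumes "linear_map_M2 \<Phi>" and "schwarz_map \<Phi>"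
  shows "(cmod (rank_one_form (map_tensor \<Phi>) w u x y))\<^sup>2
    \<le> vnorm2 x * vnorm2 w * Re (rank_one_form (map_tensor \<Phi>) u u y y)"
proof -
  define G where "G = \<Phi> (outer_mat x y)"
  define g where "g m = (\<Sum>j<2. G $$ (m,j) * u j)" for m
  have carrier: "G \<in> carrier_mat 2 2" "\<Phi> (outer_mat y y) \<in> carrier_mat 2 2"
    using assms(1) unfolding G_def linear_map_M2_def by simp_all
  have "0 \<le> Re (sesq 2 u (complex_of_real (vnorm2 x) \<cdot>\<^sub>m \<Phi> (outer_mat y y) - adj_mat G * G) u)"
    using schwarz_map_outer_mat[OF assms] unfolding G_def by (rule psd_sesq_nonneg)
  also have "\<dots> = vnorm2 x * Re (rank_one_form (map_tensor \<Phi>) u u y y) - (\<Sum>m<2. (cmod (g m))\<^sup>2)"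
    using carrier adj_mat_carrier[OF carrier(1)]
    by (simp add: sesq_minus sesq_smult sesq_adj_mult_self[OF carrier(1)] g_def
      sesq_map_outer_mat[OF assms(1)])
  finally have g_bound: "(\<Sum>m<2. (cmod (g m))\<^sup>2) \<le> vnorm2 x * Re (rank_one_form (map_tensor \<Phi>) u u y y)"
    by simp
  have "rank_one_form (map_tensor \<Phi>) w u x y = (\<Sum>m<2. cnj (w m) * g m)"
    unfolding sesq_map_outer_mat[OF assms(1), symmetric] sesq_def g_def G_def
    by (simp add: sum_distrib_left ac_simps)
  then have "(cmod (rank_one_form (map_tensor \<Phi>) w u x y))\<^sup>2 \<le> vnorm2 w * (\<Sum>m<2. (cmod (g m))\<^sup>2)"
    using cauchy_schwarz_2 by simp
  also have "\<dots> \<le> vnorm2 w * (vnorm2 x * Re (rank_one_form (map_tensor \<Phi>) u u y y))"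
    using g_bound vnorm2_nonneg by (rule mult_left_mono)
  finally show ?thesis
    by (simp add: ac_simps)
qed

section \<open>Spectrum\<close>

lemma sum_split_insert_index:
  assumes "i < Suc n"
  shows "(\<Sum>k<Suc n. g k) = g i + (\<Sum>j<n. g (insert_index i j))"
proof -
  have "(\<Sum>j<n. g (insert_index i j)) = (\<Sum>k\<in>{..<Suc n} - {i}. g k)"
    using sum.reindex[OF insert_index_inj_on[of i "{..<n}"], of g] insert_index_image[OF assms]
    by (simp add: lessThan_atLeast0)
  then show ?thesis
    using assms by (simp add: sum.remove[of "{..<Suc n}" i] del: sum.lessThan_Suc)
qed

text \<open>Differentiating the characteristic polynomial expresses its subleading coefficient through
  those of the principal minors, which gives an induction on the dimension.\<close>

lemma char_poly_coeff_trace: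
  fixes A :: "'a :: {idom, ring_char_0} mat"
  assumes "A \<in> carrier_mat (Suc m) (Suc m)"
  shows "coeff (char_poly A) m = - (\<Sum>i<Suc m. A $$ (i,i))"
  using assms
proof (induction m arbitrary: A)
  case 0
  then have "char_poly A = [:- A $$ (0,0), 1:]"
    unfolding char_poly_def char_poly_matrix_def by (simp add: det_single)
  then show ?case by simp
next
  case (Suc m)
  let ?n = "Suc (Suc m)"
  have "of_nat (Suc m) * coeff (char_poly A) (Suc m) = coeff (pderiv (char_poly A)) m"
    by (simp add: coeff_pderiv)
  also have "\<dots> = (\<Sum>i<?n. coeff (char_poly (mat_delete A i i)) m)"
    by (simp add: pderiv_char_poly[OF Suc.prems] coeff_sum)
  also have "\<dots> = (\<Sum>i<?n. A $$ (i,i) - (\<Sum>k<?n. A $$ (k,k)))"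
  proof (rule sum.cong[OF refl])
    fix i assume "i \<in> {..<?n}"
    then have i: "i < ?n" by simp
    have "(\<Sum>j<Suc m. mat_delete A i i $$ (j,j))
        = (\<Sum>j<Suc m. A $$ (insert_index i j, insert_index i j))"
      using mat_delete_index[OF Suc.prems i i] by (intro sum.cong) auto
    also have "\<dots> = (\<Sum>k<?n. A $$ (k,k)) - A $$ (i,i)"
      using sum_split_insert_index[OF i, of "\<lambda>k. A $$ (k,k)"] by simp
    finally show "coeff (char_poly (mat_delete A i i)) m = A $$ (i,i) - (\<Sum>k<?n. A $$ (k,k))"
      using Suc.IH[of "mat_delete A i i"] mat_delete_carrier[OF Suc.prems, of i i]
      by (simp del: sum.lessThan_Suc)
  qed
  also have "\<dots> = of_nat (Suc m) * (- (\<Sum>k<?n. A $$ (k,k)))"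
    by (simp add: sum_subtractf algebra_simps)
  finally show ?case
    by (simp only: mult_left_cancel[OF of_nat_neq_0])
qed

lemma rep_mat_carrier: "rep_mat \<Phi> \<in> carrier_mat 4 4"
  unfolding rep_mat_def by simp

lemma rep_mat_index:
  "r < 4 \<Longrightarrow> s < 4 \<Longrightarrow> rep_mat \<Phi> $$ (r,s) = map_tensor \<Phi> (r div 2) (r mod 2) (s div 2) (s mod 2)"
  unfolding rep_mat_def map_tensor_def matrix_unit_def by simp

lemma rep_mat_eigenvector:
  assumes "poly (char_poly (rep_mat \<Phi>)) lam = 0"
  obtains V where "\<forall>i<2. \<forall>j<2. tensor_apply (map_tensor \<Phi>) V i j = lam * V i j"
    and "\<exists>i<2. \<exists>j<2. V i j \<noteq> 0"
proof -
  have "eigenvalue (rep_mat \<Phi>) lam"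
    using eigenvalue_root_char_poly[OF rep_mat_carrier] assms by simp
  then obtain v where v: "v \<in> carrier_vec 4" "v \<noteq> 0\<^sub>v 4" "rep_mat \<Phi> *\<^sub>v v = lam \<cdot>\<^sub>v v"
    unfolding eigenvalue_def eigenvector_def using rep_mat_carrier[of \<Phi>] by auto
  define V where "V k l = v $ (2 * k + l)" for k l
  have "tensor_apply (map_tensor \<Phi>) V i j = lam * V i j" if "i < 2" "j < 2" for i j
  proof -
    have "2 * i + j < 4"
      using that by simp
    then have "(rep_mat \<Phi> *\<^sub>v v) $ (2 * i + j) = (\<Sum>s<4. rep_mat \<Phi> $$ (2 * i + j, s) * v $ s)"
      using v(1) rep_mat_carrier[of \<Phi>] by (simp add: scalar_prod_def lessThan_atLeast0)
    then show ?thesis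
      using v that unfolding tensor_apply_def sum_lessThan_4 sum_lessThan_2 V_def
      by (auto dest!: less_2_cases simp: rep_mat_index add.assoc)
  qed
  moreover have "\<exists>i<2. \<exists>j<2. V i j \<noteq> 0"
  proof (rule ccontr)
    assume "\<not> ?thesis"
    then have "V (s div 2) (s mod 2) = 0" if "s < 4" for s
      using that by auto
    then have "v $ s = 0" if "s < 4" for s
      using that unfolding V_def by (metis div_mult_mod_eq mult.commute)
    then have "v = 0\<^sub>v 4"
      using v(1) by (intro eq_vecI) auto
    then show False
      using v(2) by simp
  qed
  ultimately show thesis
    using that by blast
qed

lemma rep_mat_trace:
  assumes "char_poly (rep_mat \<Phi>) = [:-1, 1:] * [:-l1, 1:] * [:-l2, 1:] * [:-l3, 1:]"
  shows "tensor_trace (map_tensor \<Phi>) = 1 + l1 + l2 + l3"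
proof -
  have "- (1 + l1 + l2 + l3) = coeff (char_poly (rep_mat \<Phi>)) 3"
    unfolding assms by (simp add: numeral_3_eq_3 algebra_simps)
  also have "\<dots> = - (\<Sum>i<4. rep_mat \<Phi> $$ (i,i))"
    using char_poly_coeff_trace[of "rep_mat \<Phi>" 3] rep_mat_carrier by simp
  also have "\<dots> = - tensor_trace (map_tensor \<Phi>)"
    unfolding sum_lessThan_4 tensor_trace_def sum_lessThan_2 by (simp add: rep_mat_index)
  finally show ?thesis
    by (metis neg_equal_iff_equal)
qed

section \<open>Bounds on the eigenvalues\<close>

lemma eigenvalue_Re_le_1:
  assumes "linear_map_M2 \<Phi>" and "unital_M2 \<Phi>" and rank_one: "\<And>y. psd 2 (\<Phi> (outer_mat y y))"
    and "poly (char_poly (rep_mat \<Phi>)) lam = 0"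
  shows "Re lam \<le> 1"
proof (cases "lam = 1")
  case False
  obtain V where "\<forall>i<2. \<forall>j<2. tensor_apply (map_tensor \<Phi>) V i j = lam * V i j"
    and "\<exists>i<2. \<exists>j<2. V i j \<noteq> 0"
    using rep_mat_eigenvector[OF assms(4)] by blast
  note unital = unital_map_tensor[OF assms(1,2)]
  have "- 1 \<le> - 1 * Re lam"
    using proj_diff_form_le_norm[OF unital rank_one_positive_tensor(1)[OF assms(1) rank_one]]
    by (intro Re_eigenvalue_bound[OF unital rank_one_positive_tensor(2)[OF assms(1) rank_one]
      \<open>\<forall>i<2. _\<close> \<open>\<exists>i<2. _\<close> False]) simp
  then show ?thesis
    by simp
qed simp

lemma eigenvalue_Re_ge_choi:
  assumes "linear_map_M2 \<Phi>" and "unital_M2 \<Phi>" and "completely_positive \<Phi>"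
    and "poly (char_poly (rep_mat \<Phi>)) lam = 0" and "lam \<noteq> 1"
  shows "Re (tensor_trace (map_tensor \<Phi>)) - 2 \<le> 2 * Re lam"
proof -
  obtain V where "\<forall>i<2. \<forall>j<2. tensor_apply (map_tensor \<Phi>) V i j = lam * V i j"
    and "\<exists>i<2. \<exists>j<2. V i j \<noteq> 0"
    using rep_mat_eigenvector[OF assms(4)] by blast
  note unital = unital_map_tensor[OF assms(1,2)]
  note rank_one = completely_positive_rank_one[OF assms(1,3)]
  show ?thesis
    using proj_diff_form_ge_choi[OF unital completely_positive_choi[OF assms(1,3)]]
    by (intro Re_eigenvalue_bound[OF unital rank_one_positive_tensor(2)[OF assms(1) rank_one]
      \<open>\<forall>i<2. _\<close> \<open>\<exists>i<2. _\<close> assms(5)])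
qed

lemma eigenvalue_Re_ge_schwarz:
  assumes "linear_map_M2 \<Phi>" and "unital_M2 \<Phi>" and "schwarz_map \<Phi>"
    and "poly (char_poly (rep_mat \<Phi>)) lam = 0" and "lam \<noteq> 1"
  shows "2 * Re (tensor_trace (map_tensor \<Phi>)) - 5 \<le> 3 * Re lam"
proof -
  obtain V where "\<forall>i<2. \<forall>j<2. tensor_apply (map_tensor \<Phi>) V i j = lam * V i j"
    and "\<exists>i<2. \<exists>j<2. V i j \<noteq> 0"
    using rep_mat_eigenvector[OF assms(4)] by blast
  note unital = unital_map_tensor[OF assms(1,2)]
  note rank_one = schwarz_map_rank_one[OF assms(1,3)]
  show ?thesis
    using proj_diff_form_ge_schwarz[OF unital rank_one_positive_tensor(1)[OF assms(1) rank_one]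
      schwarz_map_inequality[OF assms(1,3)]]
    by (intro Re_eigenvalue_bound[OF unital rank_one_positive_tensor(2)[OF assms(1) rank_one]
      \<open>\<forall>i<2. _\<close> \<open>\<exists>i<2. _\<close> assms(5)])
qed

theorem mainTheorem11:
  fixes \<alpha> :: real and \<Phi> :: "complex mat \<Rightarrow> complex mat"
    and l1 l2 l3 :: complex
  assumes "\<alpha> \<in> {1, 3/2, 2}"
    and "linear_map_M2 \<Phi>"
    and "unital_M2 \<Phi>"
    and "alpha_positive \<alpha> \<Phi>"
    and "char_poly (rep_mat \<Phi>) = [:-1, 1:] * [:-l1, 1:] * [:-l2, 1:] * [:-l3, 1:]"
    and "Re l1 \<ge> Re l2" and "Re l2 \<ge> Re l3"
  shows "(\<alpha> - 1) * (1 + Re l3) \<ge> 2 * (\<alpha> - 2) + Re l1 + Re l2"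
proof -
  have roots: "poly (char_poly (rep_mat \<Phi>)) l = 0" if "l \<in> {l1, l2, l3}" for l
    using that unfolding assms(5) poly_mult by auto
  have trace: "Re (tensor_trace (map_tensor \<Phi>)) = 1 + Re l1 + Re l2 + Re l3"
    using rep_mat_trace[OF assms(5)] by simp
  have rank_one: "psd 2 (\<Phi> (outer_mat y y))" for y
    using assms(4) positive_map_rank_one completely_positive_rank_one[OF assms(2)]
      schwarz_map_rank_one[OF assms(2)] unfolding alpha_positive_def by blast
  have "Re l1 \<le> 1" and "Re l2 \<le> 1"
    using eigenvalue_Re_le_1[OF assms(2,3) rank_one roots] by simp_all
  consider "\<alpha> = 1" | "\<alpha> = 3/2" "schwarz_map \<Phi>" | "\<alpha> = 2" "completely_positive \<Phi>"
    using assms(4) unfolding alpha_positive_def by blast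
  then show ?thesis
  proof cases
    case 1
    then show ?thesis
      using \<open>Re l1 \<le> 1\<close> \<open>Re l2 \<le> 1\<close> by simp
  next
    case 2
    have "2 * (1 + Re l1 + Re l2 + Re l3) - 5 \<le> 3 * Re l3" if "l3 \<noteq> 1"
      using eigenvalue_Re_ge_schwarz[OF assms(2,3) 2(2) roots that] trace by simp
    then show ?thesis
      unfolding \<open>\<alpha> = 3/2\<close> using \<open>Re l1 \<le> 1\<close> \<open>Re l2 \<le> 1\<close> by (cases "l3 = 1") auto
  next
    case 3
    have "(1 + Re l1 + Re l2 + Re l3) - 2 \<le> 2 * Re l3" if "l3 \<noteq> 1"
      using eigenvalue_Re_ge_choi[OF assms(2,3) 3(2) roots that] trace by simp
    then show ?thesis
      unfolding \<open>\<alpha> = 2\<close> using \<open>Re l1 \<le> 1\<close> \<open>Re l2 \<le> 1\<close> by (cases "l3 = 1") auto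
  qed
qed

end
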